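(* Let $v$ satisfy the standing assumptions and the doubling condition, with constant $D$. Let $\{n_k\}_{k\ge1}$ be a sequence of positive integers with $n_{k+1}\ge\lambda n_k$ for all $k$, where $\lambda>1$, and let $u(z)=\operatorname{Re}\sum_k a_{n_k}z^{n_k}$, $a_{n_k}\in\mathbb{C}$, where the series converges in $\mathbb{D}$. Then $u\in k^\infty_v$ if and only if there exists $\gamma>0$ such that $\sum_{n_k\le N}|a_{n_k}|\le\gamma\, g(N)$ for every $N\in\mathbb{N}$.
   Context: Standing assumptions: $v:[0,1)\to[1,\infty)$ is positive, increasing, continuous, $v(0)=1$, $\lim_{r\to1}v(r)=+\infty$; $g(x)=v(1-x^{-1})$ for $x\ge1$. Doubling condition: there is $D\ge1$ with $v(1-d)\le D\,v(1-2d)$ for all $d\in(0,1/2]$, equivalently $g(2x)\le D g(x)$ for $x\ge1$. $k^\infty_v$ is the set of real harmonic functions $u$ on the unit disk $\mathbb{D}$ for which there is $K>0$ with $u(z)\le K v(|z|)$ for all $z\in\mathbb{D}$. *)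

theory Defs
  imports "HOL-Analysis.Analysis"
begin

definition weight :: "(real \<Rightarrow> real) \<Rightarrow> bool" where
  "weight v \<longleftrightarrow> (\<forall>r\<in>{0..<1}. v r \<ge> 1) \<and> mono_on {0..<1} v \<and>
     continuous_on {0..<1} v \<and> v 0 = 1 \<and> filterlim v at_top (at_left 1)"

definition gfun :: "(real \<Rightarrow> real) \<Rightarrow> real \<Rightarrow> real" where
  "gfun v x = v (1 - 1 / x)"

definition doubling :: "(real \<Rightarrow> real) \<Rightarrow> real \<Rightarrow> bool" where
  "doubling v D \<longleftrightarrow> D \<ge> 1 \<and> (\<forall>d\<in>{0<..1/2}. v (1 - d) \<le> D * v (1 - 2 * d))"

definition dx :: "(complex \<Rightarrow> real) \<Rightarrow> complex \<Rightarrow> real" where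
  "dx u z = deriv (\<lambda>t. u (z + complex_of_real t)) 0"

definition dy :: "(complex \<Rightarrow> real) \<Rightarrow> complex \<Rightarrow> real" where
  "dy u z = deriv (\<lambda>t. u (z + \<i> * complex_of_real t)) 0"

definition harmonic_on :: "complex set \<Rightarrow> (complex \<Rightarrow> real) \<Rightarrow> bool" where
  "harmonic_on S u \<longleftrightarrow> open S \<and>
     (\<forall>z\<in>S. u differentiable (at z) \<and> dx u differentiable (at z) \<and> dy u differentiable (at z)) \<and>
     continuous_on S (dx (dx u)) \<and> continuous_on S (dx (dy u)) \<and>
     continuous_on S (dy (dx u)) \<and> continuous_on S (dy (dy u)) \<and>
     (\<forall>z\<in>S. dx (dx u) z + dy (dy u) z = 0)"

definition kv_inf :: "(real \<Rightarrow> real) \<Rightarrow> (complex \<Rightarrow> real) set" where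
  "kv_inf v = {u. harmonic_on (ball 0 1) u \<and> (\<exists>K>0. \<forall>z\<in>ball 0 1. u z \<le> K * v (norm z))}"

end

theory Submission
  imports Defs "HOL-Complex_Analysis.Cauchy_Integral_Formula"
begin

(*
  On the circle |z| = r, u is the cosine series SUM |a k| r^(n k) cos(n k t + Arg a k).
  Splitting the indices into residue classes modulo a large q makes each class dissociated
  (every frequency exceeds twice the sum of the earlier ones) and well separated from all other
  frequencies.  Integrating u against the nonnegative Riesz product prod (1 + cos(m j t + phi j)),
  which has mean 1 and Fourier coefficient 1/2 at each m j, turns the ONE-SIDED bound u <= B into
  SUM |a k| r^(n k) <= 2 q B.  Taking r = N/(N+1) and using the doubling condition gives the claim.

  Decompose the exponents dyadically relative to X = 1/(1-r): on the level
  n k <= 2^(j+1) X one has r^(n k) <= e^(1-2^j), while the coefficient sum there is at most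
  gamma D^(j+1) v(r).  Summing gives |u(z)| <= gamma C(D) v(|z|).  Harmonicity holds because a
  gap series is a power series, hence holomorphic, and real parts of holomorphic functions are
  harmonic.
*)

definition riesz_prod :: "(nat \<Rightarrow> nat) \<Rightarrow> (nat \<Rightarrow> real) \<Rightarrow> nat \<Rightarrow> real \<Rightarrow> real" where
  "riesz_prod m \<phi> J \<theta> = (\<Prod>j<J. 1 + cos (real (m j) * \<theta> + \<phi> j))"

definition riesz_coeff :: "(nat \<Rightarrow> nat) \<Rightarrow> (nat \<Rightarrow> real) \<Rightarrow> nat \<Rightarrow> int \<Rightarrow> real \<Rightarrow> real" where
  "riesz_coeff m \<phi> J k \<psi> =
     integral {0..2*pi} (\<lambda>\<theta>. cos (of_int k * \<theta> + \<psi>) * riesz_prod m \<phi> J \<theta>)"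

definition dissociated :: "(nat \<Rightarrow> nat) \<Rightarrow> bool" where
  "dissociated m \<longleftrightarrow> (\<forall>J. 2 * (\<Sum>j<J. m j) < m J)"

lemma riesz_prod_continuous [continuous_intros]: "continuous_on A (riesz_prod m \<phi> J)"
  unfolding riesz_prod_def by (intro continuous_intros)

lemma riesz_prod_nonneg: "riesz_prod m \<phi> J \<theta> \<ge> 0"
  unfolding riesz_prod_def by (intro prod_nonneg) (smt (verit) cos_ge_minus_one)

lemma riesz_prod_le: "riesz_prod m \<phi> J \<theta> \<le> 2 ^ J"
proof -
  have "riesz_prod m \<phi> J \<theta> \<le> (\<Prod>j<J. (2::real))"
    unfolding riesz_prod_def by (intro prod_mono) (smt (verit) cos_ge_minus_one cos_le_one)
  then show ?thesis by simp
qed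

lemma integral_cos_linear:
  assumes "k \<noteq> 0"
  shows "integral {0..2*pi} (\<lambda>\<theta>. cos (of_int k * \<theta> + \<psi>)) = 0"
proof -
  have "((\<lambda>\<theta>. cos (of_int k * \<theta> + \<psi>)) has_integral
        (sin (of_int k * (2*pi) + \<psi>) / of_int k - sin (of_int k * 0 + \<psi>) / of_int k)) {0..2*pi}"
  proof (rule fundamental_theorem_of_calculus)
    fix x assume "x \<in> {0..2*pi}"
    show "((\<lambda>\<theta>. sin (of_int k * \<theta> + \<psi>) / of_int k) has_vector_derivative cos (of_int k * x + \<psi>))
          (at x within {0..2*pi})"
      using assms
      by (auto intro!: derivative_eq_intros simp: has_real_derivative_iff_has_vector_derivative[symmetric])
  qed simp
  moreover have "sin (of_int k * (2*pi) + \<psi>) = sin \<psi>"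
  proof -
    have "sin (of_int k * (2*pi) + \<psi>) = sin ((2*pi) * of_int k) * cos \<psi> + cos ((2*pi) * of_int k) * sin \<psi>"
      by (simp add: sin_add mult.commute)
    then show ?thesis by simp
  qed
  ultimately show ?thesis by (simp add: integral_unique)
qed

lemma riesz_coeff_0: "riesz_coeff m \<phi> 0 k \<psi> = (if k = 0 then 2 * pi * cos \<psi> else 0)"
  unfolding riesz_coeff_def riesz_prod_def using integral_cos_linear[of k \<psi>] by simp

text \<open>Multiplying by the factor \<open>1 + cos (m J \<theta> + \<phi> J)\<close> shifts the frequency \<open>k\<close> by \<open>\<plusminus>m J\<close>
  (product-to-sum formula); this recursion drives all computations of Riesz coefficients.\<close>
lemma riesz_coeff_Suc:
  "riesz_coeff m \<phi> (Suc J) k \<psi> = riesz_coeff m \<phi> J k \<psi>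
     + riesz_coeff m \<phi> J (k - int (m J)) (\<psi> - \<phi> J) / 2
     + riesz_coeff m \<phi> J (k + int (m J)) (\<psi> + \<phi> J) / 2"
proof -
  let ?R = "riesz_prod m \<phi> J"
  let ?F = "\<lambda>j \<xi> \<theta>. cos (of_int j * \<theta> + \<xi>) * ?R \<theta>"
  have split: "cos (of_int k * \<theta> + \<psi>) * riesz_prod m \<phi> (Suc J) \<theta> =
     ?F k \<psi> \<theta> + ?F (k - int (m J)) (\<psi> - \<phi> J) \<theta> / 2 + ?F (k + int (m J)) (\<psi> + \<phi> J) \<theta> / 2" for \<theta>
  proof -
    have "cos (of_int k * \<theta> + \<psi>) * cos (real (m J) * \<theta> + \<phi> J) =
       (cos (of_int (k - int (m J)) * \<theta> + (\<psi> - \<phi> J)) + cos (of_int (k + int (m J)) * \<theta> + (\<psi> + \<phi> J))) / 2"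
      by (simp add: cos_times_cos algebra_simps)
    moreover have "riesz_prod m \<phi> (Suc J) \<theta> = ?R \<theta> * (1 + cos (real (m J) * \<theta> + \<phi> J))"
      unfolding riesz_prod_def by simp
    ultimately show ?thesis by (simp add: algebra_simps add_divide_distrib)
  qed
  have "(?F j \<xi> has_integral integral {0..2*pi} (?F j \<xi>)) {0..2*pi}" for j \<xi>
    by (intro integrable_integral integrable_continuous_interval continuous_intros)
  then show ?thesis
    unfolding riesz_coeff_def split
    by (intro integral_unique has_integral_add has_integral_divide)
qed

text \<open>A product of \<open>J\<close> factors is a trigonometric polynomial of degree \<open>\<Sum>j<J. m j\<close>.\<close>
lemma riesz_coeff_beyond_degree:
  assumes "\<bar>k\<bar> > int (\<Sum>j<J. m j)"
  shows "riesz_coeff m \<phi> J k \<psi> = 0"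
  using assms
proof (induction J arbitrary: k \<psi>)
  case 0
  then show ?case by (simp add: riesz_coeff_0)
next
  case (Suc J)
  then have "\<bar>k\<bar> > int (\<Sum>j<J. m j)" "\<bar>k - int (m J)\<bar> > int (\<Sum>j<J. m j)"
    "\<bar>k + int (m J)\<bar> > int (\<Sum>j<J. m j)" by auto
  then show ?case unfolding riesz_coeff_Suc using Suc.IH by simp
qed

lemma riesz_coeff_constant:
  assumes "dissociated m"
  shows "riesz_coeff m \<phi> J 0 \<psi> = 2 * pi * cos \<psi>"
proof (induction J arbitrary: \<psi>)
  case 0
  then show ?case by (simp add: riesz_coeff_0)
next
  case (Suc J)
  have "riesz_coeff m \<phi> J (0 - int (m J)) (\<psi> - \<phi> J) = 0"
    "riesz_coeff m \<phi> J (0 + int (m J)) (\<psi> + \<phi> J) = 0"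
    using assms[unfolded dissociated_def, rule_format, of J]
    by (auto intro!: riesz_coeff_beyond_degree simp del: of_nat_sum)
  then show ?case unfolding riesz_coeff_Suc using Suc.IH by simp
qed

lemma riesz_coeff_at_frequency:
  assumes diss: "dissociated m" and "i < J"
  shows "riesz_coeff m \<phi> J (int (m i)) \<psi> = pi * cos (\<psi> - \<phi> i)"
  using assms(2)
proof (induction J arbitrary: \<psi>)
  case 0
  then show ?case by simp
next
  case (Suc J)
  have large: "2 * (\<Sum>j<J. m j) < m J" using diss unfolding dissociated_def by blast
  show ?case
  proof (cases "i = J")
    case True
    then have "riesz_coeff m \<phi> J (int (m i)) \<psi> = 0"
      "riesz_coeff m \<phi> J (int (m i) + int (m J)) (\<psi> + \<phi> J) = 0"
      using large by (auto intro!: riesz_coeff_beyond_degree simp del: of_nat_sum)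
    moreover have "riesz_coeff m \<phi> J (int (m i) - int (m J)) (\<psi> - \<phi> J) = 2 * pi * cos (\<psi> - \<phi> i)"
      using riesz_coeff_constant[OF diss] True by simp
    ultimately show ?thesis unfolding riesz_coeff_Suc by simp
  next
    case False
    then have iJ: "i < J" using Suc.prems by simp
    then have "m i \<le> (\<Sum>j<J. m j)" by (intro member_le_sum) auto
    then have "riesz_coeff m \<phi> J (int (m i) - int (m J)) (\<psi> - \<phi> J) = 0"
      "riesz_coeff m \<phi> J (int (m i) + int (m J)) (\<psi> + \<phi> J) = 0"
      using large by (auto intro!: riesz_coeff_beyond_degree simp del: of_nat_sum)
    then show ?thesis unfolding riesz_coeff_Suc using Suc.IH[OF iJ] by simp
  qed
qed

lemma riesz_coeff_off_frequencies:
  assumes "k \<noteq> 0" and far: "\<And>j. j < J \<Longrightarrow> \<bar>\<bar>k\<bar> - int (m j)\<bar> > int (\<Sum>i<j. m i)"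
  shows "riesz_coeff m \<phi> J k \<psi> = 0"
  using far
proof (induction J arbitrary: \<psi>)
  case 0
  then show ?case using assms(1) by (simp add: riesz_coeff_0)
next
  case (Suc J)
  have "\<bar>\<bar>k\<bar> - int (m J)\<bar> > int (\<Sum>i<J. m i)" using Suc.prems by simp
  then have "riesz_coeff m \<phi> J (k - int (m J)) (\<psi> - \<phi> J) = 0"
    "riesz_coeff m \<phi> J (k + int (m J)) (\<psi> + \<phi> J) = 0"
    by (auto intro!: riesz_coeff_beyond_degree)
  then show ?case unfolding riesz_coeff_Suc using Suc by simp
qed

lemma riesz_integral_single_frequency:
  fixes \<psi> :: "nat \<Rightarrow> real" and nn g :: "nat \<Rightarrow> nat"
  assumes diss: "dissociated (nn \<circ> g)"
    and far: "l \<notin> g ` {..<J} \<Longrightarrow>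
      nn l \<noteq> 0 \<and> (\<forall>j<J. \<bar>int (nn l) - int (nn (g j))\<bar> > int (\<Sum>i<j. nn (g i)))"
  shows "((\<lambda>\<theta>. cos (real (nn l) * \<theta> + \<psi> l) * riesz_prod (nn \<circ> g) (\<psi> \<circ> g) J \<theta>)
           has_integral (if l \<in> g ` {..<J} then pi else 0)) {0..2*pi}"
proof -
  have "((\<lambda>\<theta>. cos (real (nn l) * \<theta> + \<psi> l) * riesz_prod (nn \<circ> g) (\<psi> \<circ> g) J \<theta>)
           has_integral riesz_coeff (nn \<circ> g) (\<psi> \<circ> g) J (int (nn l)) (\<psi> l)) {0..2*pi}"
    unfolding riesz_coeff_def
    by (simp, intro integrable_integral integrable_continuous_interval continuous_intros)
  moreover have "riesz_coeff (nn \<circ> g) (\<psi> \<circ> g) J (int (nn l)) (\<psi> l) = (if l \<in> g ` {..<J} then pi else 0)"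
  proof (cases "l \<in> g ` {..<J}")
    case True
    then obtain j where "j < J" "l = g j" by blast
    then show ?thesis using riesz_coeff_at_frequency[OF diss, of j J "\<psi> \<circ> g" "\<psi> l"] True by simp
  next
    case False
    then show ?thesis using far by (auto intro!: riesz_coeff_off_frequencies)
  qed
  ultimately show ?thesis by simp
qed

text \<open>Hence integrating an absolutely convergent cosine series against that Riesz product picks out
  exactly the coefficients \<open>b (g j)\<close>; the interchange of sum and integral is justified by uniform
  convergence.\<close>
lemma cosine_series_riesz_integral:
  fixes b \<psi> :: "nat \<Rightarrow> real" and nn g :: "nat \<Rightarrow> nat"
  assumes diss: "dissociated (nn \<circ> g)" and inj: "inj g"
    and far: "\<And>l. l \<notin> g ` {..<J} \<Longrightarrow>
      nn l \<noteq> 0 \<and> (\<forall>j<J. \<bar>int (nn l) - int (nn (g j))\<bar> > int (\<Sum>i<j. nn (g i)))"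
    and abs_summable: "summable (\<lambda>l. \<bar>b l\<bar>)"
  shows "((\<lambda>\<theta>. (\<Sum>l. b l * cos (real (nn l) * \<theta> + \<psi> l)) * riesz_prod (nn \<circ> g) (\<psi> \<circ> g) J \<theta>)
           has_integral pi * (\<Sum>j<J. b (g j))) {0..2*pi}"
proof -
  define P where "P = riesz_prod (nn \<circ> g) (\<psi> \<circ> g) J"
  define G where "G = g ` {..<J}"
  define summand where "summand = (\<lambda>l \<theta>. b l * (cos (real (nn l) * \<theta> + \<psi> l) * P \<theta>))"
  define c where "c = (\<lambda>l. b l * (if l \<in> G then pi else 0))"
  have summand_integral: "(summand l has_integral c l) {0..2*pi}" for l
    unfolding summand_def c_def P_def G_def
    using riesz_integral_single_frequency[OF diss far] by (rule has_integral_mult_right)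
  obtain L0 where L0: "G \<subseteq> {..<L0}"
    unfolding G_def by (meson finite_imageI finite_lessThan finite_nat_iff_bounded)
  have partial_sums: "(\<Sum>l<L. c l) = pi * (\<Sum>j<J. b (g j))" if "L \<ge> L0" for L
  proof -
    have "{..<L} \<inter> G = G" using L0 that by auto
    then have "(\<Sum>l<L. c l) = (\<Sum>l\<in>G. pi * b l)"
      unfolding c_def by (simp add: sum.If_cases if_distrib mult.commute del: mult_zero_right)
    also have "\<dots> = pi * (\<Sum>j<J. b (g j))"
      unfolding G_def using inj by (simp add: sum.reindex inj_on_def inj_def sum_distrib_left)
    finally show ?thesis .
  qed
  have "uniform_limit {0..2*pi} (\<lambda>L \<theta>. \<Sum>l<L. summand l \<theta>) (\<lambda>\<theta>. \<Sum>l. summand l \<theta>) sequentially"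
  proof (rule Weierstrass_m_test)
    show "summable (\<lambda>l. \<bar>b l\<bar> * 2 ^ J)" using abs_summable by (rule summable_mult2)
    fix l \<theta>
    have "\<bar>cos (real (nn l) * \<theta> + \<psi> l) * P \<theta>\<bar> \<le> 1 * 2 ^ J"
      unfolding abs_mult P_def using riesz_prod_nonneg riesz_prod_le
      by (intro mult_mono) auto
    then show "norm (summand l \<theta>) \<le> \<bar>b l\<bar> * 2 ^ J"
      unfolding summand_def by (simp add: abs_mult mult_left_mono)
  qed
  moreover have "continuous_on {0..2*pi} (\<lambda>\<theta>. \<Sum>l<L. summand l \<theta>)" for L
    unfolding summand_def P_def by (intro continuous_intros)
  ultimately obtain I K where I: "\<And>L. ((\<lambda>\<theta>. \<Sum>l<L. summand l \<theta>) has_integral I L) {0..2*pi}"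
      and K: "((\<lambda>\<theta>. \<Sum>l. summand l \<theta>) has_integral K) {0..2*pi}" and lim: "I \<longlonglongrightarrow> K"
    by (rule uniform_limit_integral) auto
  have "I L = (\<Sum>l<L. c l)" for L
    using has_integral_unique[OF I has_integral_sum[OF finite_lessThan summand_integral]] .
  then have "eventually (\<lambda>L. I L = pi * (\<Sum>j<J. b (g j))) sequentially"
    using partial_sums eventually_sequentially by auto
  with lim have "K = pi * (\<Sum>j<J. b (g j))"
    using tendsto_eventually LIMSEQ_unique by metis
  moreover have "(\<Sum>l. summand l \<theta>) = (\<Sum>l. b l * cos (real (nn l) * \<theta> + \<psi> l)) * P \<theta>" for \<theta>
  proof -
    have "summable (\<lambda>l. b l * cos (real (nn l) * \<theta> + \<psi> l))"
      by (rule summable_comparison_test[OF _ abs_summable]) (auto simp: abs_mult mult_left_le)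
    then show ?thesis unfolding summand_def by (simp add: suminf_mult2 mult.assoc)
  qed
  ultimately show ?thesis using K unfolding P_def by simp
qed

text \<open>Consequently, a one-sided bound \<open>\<le> B\<close> on such a cosine series bounds the selected coefficients
  by \<open>2 B\<close>: the Riesz product is nonnegative with integral \<open>2\<pi>\<close>.\<close>
lemma cosine_series_upper_bound:
  fixes b \<psi> :: "nat \<Rightarrow> real" and nn g :: "nat \<Rightarrow> nat"
  assumes diss: "dissociated (nn \<circ> g)" and inj: "inj g"
    and far: "\<And>l. l \<notin> g ` {..<J} \<Longrightarrow>
      nn l \<noteq> 0 \<and> (\<forall>j<J. \<bar>int (nn l) - int (nn (g j))\<bar> > int (\<Sum>i<j. nn (g i)))"
    and abs_summable: "summable (\<lambda>l. \<bar>b l\<bar>)"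
    and bounded: "\<And>\<theta>. (\<Sum>l. b l * cos (real (nn l) * \<theta> + \<psi> l)) \<le> B"
  shows "(\<Sum>j<J. b (g j)) \<le> 2 * B"
proof -
  define P where "P = riesz_prod (nn \<circ> g) (\<psi> \<circ> g) J"
  have "(P has_integral riesz_coeff (nn \<circ> g) (\<psi> \<circ> g) J 0 0) {0..2*pi}"
    unfolding riesz_coeff_def P_def
    by (simp, intro integrable_integral integrable_continuous_interval continuous_intros)
  then have "(P has_integral 2 * pi) {0..2*pi}" using riesz_coeff_constant[OF diss] by simp
  have "pi * (\<Sum>j<J. b (g j)) \<le> B * (2 * pi)"
  proof (rule has_integral_le)
    show "((\<lambda>\<theta>. (\<Sum>l. b l * cos (real (nn l) * \<theta> + \<psi> l)) * P \<theta>)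
           has_integral pi * (\<Sum>j<J. b (g j))) {0..2*pi}"
      unfolding P_def using far by (intro cosine_series_riesz_integral diss inj abs_summable) auto
    show "((\<lambda>\<theta>. B * P \<theta>) has_integral B * (2 * pi)) {0..2*pi}"
      using \<open>(P has_integral 2 * pi) {0..2*pi}\<close> by (rule has_integral_mult_right)
    show "(\<Sum>l. b l * cos (real (nn l) * \<theta> + \<psi> l)) * P \<theta> \<le> B * P \<theta>" for \<theta>
      using bounded riesz_prod_nonneg unfolding P_def by (rule mult_right_mono)
  qed
  then show ?thesis by (simp add: algebra_simps)
qed

lemma geometric_growth_sum_bound:
  fixes m :: "nat \<Rightarrow> nat" and \<mu> :: real
  assumes "\<And>j. real (m (Suc j)) \<ge> \<mu> * real (m j)" "\<mu> > 1"
  shows "(\<mu> - 1) * (\<Sum>i<J. real (m i)) \<le> real (m J)"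
proof (induction J)
  case 0 then show ?case by simp
next
  case (Suc J)
  have "(\<mu> - 1) * (\<Sum>i<Suc J. real (m i)) = (\<mu> - 1) * (\<Sum>i<J. real (m i)) + (\<mu> - 1) * real (m J)"
    by (simp add: algebra_simps)
  also have "\<dots> \<le> real (m J) + (\<mu> - 1) * real (m J)" using Suc by simp
  also have "\<dots> = \<mu> * real (m J)" by (simp add: algebra_simps)
  also have "\<dots> \<le> real (m (Suc J))" by (rule assms(1))
  finally show ?case .
qed

locale lacunary =
  fixes lam :: real and n :: "nat \<Rightarrow> nat"
  assumes lam_gt_1: "lam > 1" and n_pos: "\<And>k. n k > 0"
    and n_growth: "\<And>k. real (n (Suc k)) \<ge> lam * real (n k)"
begin

lemma strict_mono_n: "strict_mono n"
proof (rule strict_monoI_Suc)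
  fix k
  have "real (n k) < lam * real (n k)" using lam_gt_1 n_pos[of k] by simp
  also have "\<dots> \<le> real (n (Suc k))" by (rule n_growth)
  finally show "n k < n (Suc k)" by simp
qed

lemma n_ge_Suc: "n k \<ge> Suc k"
proof (induction k)
  case 0 then show ?case using n_pos[of 0] by simp
next
  case (Suc k) then show ?case using strict_mono_n[THEN strict_monoD, of k "Suc k"] by simp
qed

lemma finite_indices_below: "finite {k. n k \<le> N}"
proof (rule finite_subset)
  show "{k. n k \<le> N} \<subseteq> {..<N}"
    using n_ge_Suc by (auto simp: Suc_le_eq intro: less_le_trans)
qed simp

lemma lacunary_power_growth: "lam ^ d * real (n k) \<le> real (n (k + d))"
proof (induction d)
  case 0 then show ?case by simp
next
  case (Suc d)
  have "lam ^ Suc d * real (n k) = lam * (lam ^ d * real (n k))" by simp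
  also have "\<dots> \<le> lam * real (n (k + d))" using Suc.IH lam_gt_1 by (intro mult_left_mono) auto
  also have "\<dots> \<le> real (n (k + Suc d))" using n_growth[of "k + d"] by simp
  finally show ?case .
qed

lemma lacunary_less: assumes "l < p" shows "lam * real (n l) \<le> real (n p)"
proof -
  obtain d where d: "p = l + Suc d" using less_imp_Suc_add[OF assms] by auto
  have "lam \<le> lam ^ Suc d" using power_increasing[of 1 "Suc d" lam] lam_gt_1 by simp
  then have "lam * real (n l) \<le> lam ^ Suc d * real (n l)" by (intro mult_right_mono) auto
  also have "\<dots> \<le> real (n p)" unfolding d by (rule lacunary_power_growth)
  finally show ?thesis .
qed

lemma lacunary_separation:
  assumes "l \<noteq> p" shows "(1 - 1/lam) * real (n p) \<le> \<bar>real (n l) - real (n p)\<bar>"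
proof (cases "l < p")
  case True
  have "lam * real (n l) \<le> real (n p)" by (rule lacunary_less[OF True])
  then have "real (n l) \<le> real (n p) / lam" using lam_gt_1 by (simp add: field_simps)
  moreover have "real (n p) * 1 \<le> real (n p) * lam" using lam_gt_1 by (intro mult_left_mono) auto
  then have "real (n p) / lam \<le> real (n p)" using lam_gt_1 by (simp add: field_simps)
  ultimately show ?thesis by (simp add: algebra_simps)
next
  case False
  then have "lam * real (n p) \<le> real (n l)" using assms by (intro lacunary_less) simp
  moreover have "1 - 1/lam \<le> lam - 1"
  proof -
    have "(lam - 1) - (1 - 1/lam) = (lam - 1)^2 / lam"
      using lam_gt_1 by (simp add: field_simps power2_eq_square)
    moreover have "(lam - 1)^2 / lam \<ge> 0" using lam_gt_1 by simp
    ultimately show ?thesis by linarith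
  qed
  then have "(1 - 1/lam) * real (n p) \<le> (lam - 1) * real (n p)" by (rule mult_right_mono) simp
  ultimately show ?thesis by (simp add: algebra_simps)
qed

text \<open>Splitting the indices into the residue classes modulo a large enough \<open>q\<close>: the frequencies
  \<open>n (c + q j)\<close> grow with ratio \<open>\<lambda>^q\<close>, which makes them dissociated \<dots>\<close>
lemma exists_block_length: "\<exists>q. lam ^ q \<ge> 4 \<and> lam ^ q - 1 > lam / (lam - 1)"
proof -
  obtain q where "max 4 (1 + lam / (lam - 1)) < lam ^ q" using real_arch_pow[OF lam_gt_1] by blast
  then show ?thesis by (intro exI[of _ q]) auto
qed

lemma residue_class_sum_bound:
  assumes "lam ^ q > 1"
  shows "(lam ^ q - 1) * (\<Sum>i<J. real (n (c + q * i))) \<le> real (n (c + q * J))"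
proof (rule geometric_growth_sum_bound[OF _ assms])
  show "lam ^ q * real (n (c + q * j)) \<le> real (n (c + q * Suc j))" for j
    using lacunary_power_growth[of q "c + q * j"] by (simp add: algebra_simps)
qed

lemma residue_class_dissociated:
  assumes "lam ^ q \<ge> 4"
  shows "dissociated (n \<circ> (\<lambda>j. c + q * j))"
  unfolding dissociated_def
proof
  fix J
  have "3 * (\<Sum>i<J. real (n (c + q * i))) \<le> (lam ^ q - 1) * (\<Sum>i<J. real (n (c + q * i)))"
    using assms by (intro mult_right_mono sum_nonneg) auto
  also have "\<dots> \<le> real (n (c + q * J))" using assms by (intro residue_class_sum_bound) simp
  finally have "real (2 * (\<Sum>i<J. n (c + q * i))) < real (n (c + q * J))"
    using n_pos[of "c + q * J"] by (simp add: sum_nonneg)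
  then show "2 * (\<Sum>j<J. (n \<circ> (\<lambda>j. c + q * j)) j) < (n \<circ> (\<lambda>j. c + q * j)) J"
    by (simp only: of_nat_less_iff o_def)
qed

lemma residue_class_far:
  assumes q: "lam ^ q - 1 > lam / (lam - 1)" and l: "l \<noteq> c + q * j"
  shows "\<bar>int (n l) - int (n (c + q * j))\<bar> > int (\<Sum>i<j. n (c + q * i))"
proof -
  define \<mu> where "\<mu> = lam ^ q"
  have "lam / (lam - 1) > 0" using lam_gt_1 by simp
  then have \<mu>: "\<mu> - 1 > lam / (lam - 1)" "\<mu> - 1 > 0" using q unfolding \<mu>_def by auto
  have ratio: "1 / (\<mu> - 1) < 1 - 1/lam"
  proof -
    have "1 / (\<mu> - 1) < 1 / (lam / (lam - 1))"
      using \<mu> \<open>lam / (lam - 1) > 0\<close> by (intro divide_strict_left_mono mult_pos_pos) auto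
    also have "\<dots> = 1 - 1/lam" using lam_gt_1 by (simp add: field_simps)
    finally show ?thesis .
  qed
  have "(\<mu> - 1) * (\<Sum>i<j. real (n (c + q * i))) \<le> real (n (c + q * j))"
    using \<mu> unfolding \<mu>_def by (intro residue_class_sum_bound) simp
  then have "(\<Sum>i<j. real (n (c + q * i))) \<le> real (n (c + q * j)) / (\<mu> - 1)"
    using \<mu> by (simp add: pos_le_divide_eq mult.commute)
  also have "\<dots> = (1 / (\<mu> - 1)) * real (n (c + q * j))" by simp
  also have "\<dots> < (1 - 1/lam) * real (n (c + q * j))"
    using ratio n_pos[of "c + q * j"] by (intro mult_strict_right_mono) simp_all
  also have "\<dots> \<le> \<bar>real (n l) - real (n (c + q * j))\<bar>" by (rule lacunary_separation[OF l])
  finally have "real_of_int (int (\<Sum>i<j. n (c + q * i))) < real_of_int \<bar>int (n l) - int (n (c + q * j))\<bar>"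
    by simp
  then show ?thesis by (simp only: of_int_less_iff)
qed

end

definition gap_coeff :: "(nat \<Rightarrow> nat) \<Rightarrow> (nat \<Rightarrow> complex) \<Rightarrow> nat \<Rightarrow> complex" where
  "gap_coeff n a m = (if m \<in> range n then a (inv n m) else 0)"

context lacunary
begin

lemma gap_coeff_at: "gap_coeff n a (n k) = a k"
  unfolding gap_coeff_def using strict_mono_n by (simp add: strict_mono_imp_inj_on inv_f_f)

lemma summable_gap_series_iff:
  fixes a :: "nat \<Rightarrow> complex" and z :: complex
  shows "summable (\<lambda>k. a k * z ^ n k) \<longleftrightarrow> summable (\<lambda>m. gap_coeff n a m * z ^ m)"
proof -
  have "summable (\<lambda>k. gap_coeff n a (n k) * z ^ n k) \<longleftrightarrow> summable (\<lambda>m. gap_coeff n a m * z ^ m)"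
    by (rule summable_mono_reindex[OF strict_mono_n]) (simp add: gap_coeff_def)
  then show ?thesis by (simp only: gap_coeff_at)
qed

lemma suminf_gap_series:
  fixes a :: "nat \<Rightarrow> complex" and z :: complex
  shows "(\<Sum>k. a k * z ^ n k) = (\<Sum>m. gap_coeff n a m * z ^ m)"
proof -
  have "(\<Sum>k. gap_coeff n a (n k) * z ^ n k) = (\<Sum>m. gap_coeff n a m * z ^ m)"
    by (rule suminf_mono_reindex[OF strict_mono_n]) (simp add: gap_coeff_def)
  then show ?thesis by (simp only: gap_coeff_at)
qed

text \<open>Convergence of the gap series in the disc is absolute, like for any power series.\<close>
lemma gap_series_abs_summable:
  fixes a :: "nat \<Rightarrow> complex" and z :: complex
  assumes summ: "\<And>z. norm z < 1 \<Longrightarrow> summable (\<lambda>k. a k * z ^ n k)" and z: "norm z < 1"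
  shows "summable (\<lambda>k. norm (a k * z ^ n k))"
proof -
  define \<rho> where "\<rho> = (norm z + 1) / 2"
  have \<rho>: "norm z < \<rho>" "\<rho> < 1" "0 \<le> \<rho>" using z unfolding \<rho>_def by auto
  then have "summable (\<lambda>k. a k * complex_of_real \<rho> ^ n k)" by (intro summ) simp
  then have "summable (\<lambda>m. gap_coeff n a m * complex_of_real \<rho> ^ m)"
    by (simp add: summable_gap_series_iff)
  then have "summable (\<lambda>m. norm (gap_coeff n a m * z ^ m))"
    by (rule powser_insidea) (use \<rho> in simp)
  moreover have "summable (\<lambda>k. norm (gap_coeff n a (n k) * z ^ n k))
      \<longleftrightarrow> summable (\<lambda>m. norm (gap_coeff n a m * z ^ m))"
    by (rule summable_mono_reindex[OF strict_mono_n]) (simp add: gap_coeff_def)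
  ultimately show ?thesis by (simp only: gap_coeff_at)
qed

lemma gap_series_holomorphic:
  fixes a :: "nat \<Rightarrow> complex"
  assumes summ: "\<And>z. norm z < 1 \<Longrightarrow> summable (\<lambda>k. a k * z ^ n k)"
  shows "(\<lambda>z. \<Sum>k. a k * z ^ n k) holomorphic_on ball 0 1"
proof -
  have "\<And>z. norm z < 1 \<Longrightarrow> summable (\<lambda>m. gap_coeff n a m * z ^ m)"
    using summ by (simp add: summable_gap_series_iff)
  then have "\<forall>z\<in>ball 0 1. ((\<lambda>z. \<Sum>m. gap_coeff n a m * z ^ m) has_field_derivative
      (\<Sum>m. diffs (gap_coeff n a) m * z ^ m)) (at z)"
    by (auto intro!: termdiffs_strong')
  then show ?thesis
    unfolding suminf_gap_series by (auto simp: holomorphic_on_open)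
qed

end

lemma partials_of_Re:
  fixes u :: "complex \<Rightarrow> real" and G :: "complex \<Rightarrow> complex"
  assumes S: "open S" "z \<in> S" and eq: "\<And>w. w \<in> S \<Longrightarrow> u w = Re (G w)"
    and d: "(G has_field_derivative G') (at z)"
  shows "dx u z = Re G'" "dy u z = Re (\<i> * G')"
proof -
  have along: "((\<lambda>t. u (z + c * complex_of_real t)) has_field_derivative Re (G' * c)) (at 0)" for c
  proof -
    have "((\<lambda>w. z + c * w) has_field_derivative c) (at 0)" by (auto intro!: derivative_eq_intros)
    moreover have "(G has_field_derivative G') (at (z + c * 0))" using d by simp
    ultimately have "((\<lambda>w. G (z + c * w)) has_field_derivative G' * c) (at 0)"
      by (rule DERIV_chain2[rotated])
    then have "((\<lambda>t. Re (G (z + c * complex_of_real t))) has_field_derivative Re (G' * c)) (at 0)"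
      using has_field_derivative_Re[OF has_vector_derivative_real_field[of "\<lambda>w. G (z + c * w)" "G' * c" 0 UNIV]]
      by simp
    moreover have "open ((\<lambda>t::real. z + c * complex_of_real t) -` S)"
      by (rule open_vimage[OF S(1)]) (intro continuous_intros)
    ultimately show ?thesis
      by (rule has_field_derivative_transform_within_open) (use S eq in auto)
  qed
  show "dx u z = Re G'" using along[of 1] unfolding dx_def by (simp add: DERIV_imp_deriv)
  show "dy u z = Re (\<i> * G')" using along[of \<i>] unfolding dy_def by (simp add: DERIV_imp_deriv mult.commute)
qed

lemma differentiable_Re:
  fixes u :: "complex \<Rightarrow> real" and G :: "complex \<Rightarrow> complex"
  assumes S: "open S" "z \<in> S" and eq: "\<And>w. w \<in> S \<Longrightarrow> u w = Re (G w)"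
    and d: "(G has_field_derivative G') (at z)"
  shows "u differentiable (at z)"
proof -
  have "(G has_derivative (\<lambda>h. G' * h)) (at z)" using d by (simp add: has_field_derivative_def)
  then have "((\<lambda>w. Re (G w)) has_derivative (\<lambda>h. Re (G' * h))) (at z)"
    by (rule bounded_linear.has_derivative[OF bounded_linear_Re])
  then have "(u has_derivative (\<lambda>h. Re (G' * h))) (at z)"
    by (rule has_derivative_transform_within_open[OF _ S]) (use eq in auto)
  then show ?thesis unfolding differentiable_def by blast
qed

text \<open>The real part of a holomorphic function is harmonic: its second partials are
  \<open>Re F''\<close>, \<open>Re (\<i> F'')\<close> and \<open>-Re F''\<close>.\<close>
lemma harmonic_on_Re_holomorphic:
  fixes F :: "complex \<Rightarrow> complex" and u :: "complex \<Rightarrow> real"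
  assumes holo: "F holomorphic_on S" and S: "open S" and eq: "\<And>z. z \<in> S \<Longrightarrow> u z = Re (F z)"
  shows "harmonic_on S u"
proof -
  define F1 where "F1 = deriv F"
  define F2 where "F2 = deriv F1"
  have holo1: "F1 holomorphic_on S" and holo2: "F2 holomorphic_on S"
    unfolding F1_def F2_def using holo S by (auto intro!: holomorphic_deriv)
  have d1: "(F has_field_derivative F1 z) (at z)" and d2: "(F1 has_field_derivative F2 z) (at z)"
    and di: "((\<lambda>w. \<i> * F1 w) has_field_derivative \<i> * F2 z) (at z)" if "z \<in> S" for z
    using that holomorphic_derivI[OF holo S] holomorphic_derivI[OF holo1 S]
    unfolding F1_def F2_def by (auto intro!: derivative_eq_intros)
  have dxu: "dx u z = Re (F1 z)" and dyu: "dy u z = Re (\<i> * F1 z)" if "z \<in> S" for z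
    using partials_of_Re[OF S that eq d1[OF that]] by auto
  have dxx: "dx (dx u) z = Re (F2 z)" and dyx: "dy (dx u) z = Re (\<i> * F2 z)" if "z \<in> S" for z
    using partials_of_Re[OF S that dxu d2[OF that]] by auto
  have dxy: "dx (dy u) z = Re (\<i> * F2 z)" and dyy: "dy (dy u) z = - Re (F2 z)" if "z \<in> S" for z
    using partials_of_Re[OF S that dyu di[OF that]] by auto
  have F2_cont: "continuous_on S F2" using holo2 by (rule holomorphic_on_imp_continuous_on)
  have cont: "continuous_on S (\<lambda>z. Re (F2 z))" "continuous_on S (\<lambda>z. Re (\<i> * F2 z))"
    by (intro continuous_on_Re continuous_on_mult continuous_on_const F2_cont)+
  show ?thesis unfolding harmonic_on_def
  proof (intro conjI ballI S)
    fix z assume z: "z \<in> S"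
    show "u differentiable (at z)" by (rule differentiable_Re[OF S z eq d1[OF z]])
    show "dx u differentiable (at z)" by (rule differentiable_Re[OF S z dxu d2[OF z]])
    show "dy u differentiable (at z)" by (rule differentiable_Re[OF S z dyu di[OF z]])
    show "dx (dx u) z + dy (dy u) z = 0" using dxx[OF z] dyy[OF z] by simp
  next
    show "continuous_on S (dx (dx u))" using cont(1) by (rule continuous_on_eq) (auto simp: dxx)
    show "continuous_on S (dx (dy u))" using cont(2) by (rule continuous_on_eq) (auto simp: dxy)
    show "continuous_on S (dy (dx u))" using cont(2) by (rule continuous_on_eq) (auto simp: dyx)
    show "continuous_on S (dy (dy u))" using continuous_on_minus[OF cont(1)]
      by (rule continuous_on_eq) (auto simp: dyy)
  qed
qed

lemma weight_ge_1: "weight v \<Longrightarrow> 0 \<le> r \<Longrightarrow> r < 1 \<Longrightarrow> v r \<ge> 1"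
  unfolding weight_def by auto

lemma weight_mono: "weight v \<Longrightarrow> 0 \<le> x \<Longrightarrow> x \<le> y \<Longrightarrow> y < 1 \<Longrightarrow> v x \<le> v y"
  unfolding weight_def by (auto intro: mono_onD)

lemma doubling_ge_1: "doubling v D \<Longrightarrow> D \<ge> 1"
  unfolding doubling_def by simp

lemma gfun_mono: assumes "weight v" "1 \<le> x" "x \<le> y" shows "gfun v x \<le> gfun v y"
proof -
  have "1/y \<le> 1/x" using assms by (intro divide_left_mono) auto
  moreover have "1/y > 0" "1/x \<le> 1" using assms by auto
  ultimately show ?thesis unfolding gfun_def by (intro weight_mono[OF assms(1)]) auto
qed

lemma gfun_at_radius: "r < 1 \<Longrightarrow> gfun v (1 / (1 - r)) = v r"
  unfolding gfun_def by simp

lemma gfun_double: assumes "doubling v D" "x \<ge> 1" shows "gfun v (2 * x) \<le> D * gfun v x"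
proof -
  define d where "d = 1 / (2 * x)"
  have "d \<in> {0<..1/2}" unfolding d_def using assms(2) by (auto simp: field_simps)
  then have "v (1 - d) \<le> D * v (1 - 2 * d)" using assms(1) unfolding doubling_def by blast
  moreover have "1 - d = 1 - 1 / (2 * x)" "1 - 2 * d = 1 - 1 / x" unfolding d_def by auto
  ultimately show ?thesis unfolding gfun_def by simp
qed

lemma gfun_double_power:
  assumes "doubling v D" "X \<ge> 1"
  shows "gfun v (2 ^ j * X) \<le> D ^ j * gfun v X"
proof (induction j)
  case 0 then show ?case by simp
next
  case (Suc j)
  have "1 * 1 \<le> (2::real) ^ j * X" using assms(2) by (intro mult_mono) auto
  then have "gfun v (2 * (2 ^ j * X)) \<le> D * gfun v (2 ^ j * X)"
    by (intro gfun_double[OF assms(1)]) simp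
  also have "\<dots> \<le> D * (D ^ j * gfun v X)"
    using Suc doubling_ge_1[OF assms(1)] by (intro mult_left_mono) auto
  finally show ?case by (simp add: algebra_simps)
qed

lemma Re_times_rcis_power: "Re (a * rcis r \<theta> ^ k) = norm a * r ^ k * cos (real k * \<theta> + Arg a)"
proof -
  have "a * rcis r \<theta> ^ k = rcis (norm a) (Arg a) * rcis (r ^ k) (real k * \<theta>)"
    by (simp add: DeMoivre2 rcis_cmod_Arg)
  also have "\<dots> = rcis (norm a * r ^ k) (Arg a + real k * \<theta>)" by (simp add: rcis_mult)
  finally show ?thesis by (simp add: add.commute)
qed

lemma sum_residue_classes: "(\<Sum>k<q * J. f k) = (\<Sum>c<q. \<Sum>j<J. f (c + q * j))"
  for f :: "nat \<Rightarrow> real"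
proof (induction J)
  case 0 then show ?case by simp
next
  case (Suc J)
  have "(\<Sum>k<m + p. f k) = (\<Sum>k<m. f k) + (\<Sum>c<p. f (m + c))" for m p
    by (induction p) auto
  from this[of "q * J" q] show ?case using Suc by (simp add: sum.distrib add.commute)
qed

lemma radius_power_lower_bound:
  fixes N :: nat assumes "N \<ge> 1"
  shows "1 \<le> exp 1 * (real N / (real N + 1)) ^ N"
proof -
  have "(1 + 1 / real N) ^ N \<le> exp (1 / real N) ^ N"
    by (intro power_mono exp_ge_add_one_self) auto
  also have "\<dots> = exp 1" using assms by (simp flip: exp_of_nat_mult)
  finally have "(1 + 1 / real N) ^ N \<le> exp 1" .
  moreover have "1 + 1 / real N = (real N + 1) / real N" using assms by (simp add: field_simps)
  then have "real N / (real N + 1) * (1 + 1 / real N) = 1" using assms by simp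
  then have "(real N / (real N + 1)) ^ N * (1 + 1 / real N) ^ N = 1"
    by (metis power_mult_distrib power_one)
  ultimately show ?thesis
    by (metis mult_left_mono mult.commute zero_le_power divide_nonneg_nonneg of_nat_0_le_iff
        add_nonneg_nonneg zero_le_one)
qed

lemma weight_at_radius_bound:
  fixes N :: nat
  assumes "weight v" "doubling v D" "N \<ge> 1"
  shows "v (real N / (real N + 1)) \<le> D * gfun v (real N)"
proof -
  have "v (real N / (real N + 1)) = gfun v (real N + 1)"
    unfolding gfun_def using assms(3) by (simp add: field_simps)
  also have "\<dots> \<le> gfun v (2 * real N)" using assms(3) by (intro gfun_mono[OF assms(1)]) auto
  also have "\<dots> \<le> D * gfun v (real N)" using assms(3) by (intro gfun_double[OF assms(2)]) auto
  finally show ?thesis .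
qed

context lacunary
begin

text \<open>On the circle \<open>u\<close> is a cosine series;
  apply the Riesz product bound to each residue class modulo \<open>q\<close>.\<close>
lemma gap_series_circle_bound:
  fixes a :: "nat \<Rightarrow> complex" and u :: "complex \<Rightarrow> real"
  assumes summ: "\<And>z. norm z < 1 \<Longrightarrow> summable (\<lambda>k. a k * z ^ n k)"
    and u_def: "\<And>z. u z = Re (\<Sum>k. a k * z ^ n k)"
    and bounded: "\<And>z. norm z = r \<Longrightarrow> u z \<le> B"
    and r: "0 \<le> r" "r < 1"
    and q: "lam ^ q \<ge> 4" "lam ^ q - 1 > lam / (lam - 1)"
  shows "(\<Sum>k<q * J. norm (a k) * r ^ n k) \<le> 2 * q * B"
proof -
  define b where "b = (\<lambda>l. norm (a l) * r ^ n l)"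
  have q_pos: "q > 0" using q lam_gt_1 by (cases q) auto
  have abs_summable: "summable (\<lambda>l. \<bar>b l\<bar>)"
    using gap_series_abs_summable[OF summ, of "complex_of_real r"] r
    unfolding b_def by (simp add: norm_mult norm_power)
  have on_circle: "(\<Sum>l. b l * cos (real (n l) * \<theta> + Arg (a l))) \<le> B" for \<theta>
  proof -
    have "summable (\<lambda>k. a k * rcis r \<theta> ^ n k)" using r by (intro summ) simp
    then have "u (rcis r \<theta>) = (\<Sum>k. Re (a k * rcis r \<theta> ^ n k))"
      unfolding u_def by (rule Re_suminf)
    then show ?thesis using bounded[of "rcis r \<theta>"] r
      unfolding b_def Re_times_rcis_power by simp
  qed
  have class_bound: "(\<Sum>j<J. b (c + q * j)) \<le> 2 * B" for c
  proof (rule cosine_series_upper_bound[OF _ _ _ abs_summable on_circle])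
    show "dissociated (n \<circ> (\<lambda>j. c + q * j))" by (rule residue_class_dissociated[OF q(1)])
    show "inj (\<lambda>j. c + q * j)" using q_pos by (auto simp: inj_def)
    show "n l \<noteq> 0 \<and> (\<forall>j<J. \<bar>int (n l) - int (n (c + q * j))\<bar> > int (\<Sum>i<j. n (c + q * i)))"
      if "l \<notin> (\<lambda>j. c + q * j) ` {..<J}" for l
      using that n_pos[of l] residue_class_far[OF q(2)] by auto
  qed
  have "(\<Sum>k<q * J. b k) = (\<Sum>c<q. \<Sum>j<J. b (c + q * j))" by (rule sum_residue_classes)
  also have "\<dots> \<le> (\<Sum>c<q. 2 * B)" by (intro sum_mono class_bound)
  finally show ?thesis unfolding b_def by simp
qed

lemma coefficient_growth_if_bounded:
  fixes a :: "nat \<Rightarrow> complex" and u :: "complex \<Rightarrow> real"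
  assumes wv: "weight v" and dv: "doubling v D"
    and summ: "\<And>z. norm z < 1 \<Longrightarrow> summable (\<lambda>k. a k * z ^ n k)"
    and u_def: "\<And>z. u z = Re (\<Sum>k. a k * z ^ n k)"
    and K: "K > 0" "\<And>z. norm z < 1 \<Longrightarrow> u z \<le> K * v (norm z)"
  shows "\<exists>\<gamma>>0. \<forall>N::nat. N \<ge> 1 \<longrightarrow> (\<Sum>k\<in>{k. n k \<le> N}. norm (a k)) \<le> \<gamma> * gfun v (real N)"
proof -
  obtain q where q: "lam ^ q \<ge> 4" "lam ^ q - 1 > lam / (lam - 1)" using exists_block_length by blast
  have q_pos: "q > 0" using q lam_gt_1 by (cases q) auto
  define \<gamma> where "\<gamma> = exp 1 * 2 * real q * K * D"
  have "\<gamma> > 0" unfolding \<gamma>_def using q_pos K doubling_ge_1[OF dv] by simp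
  moreover have "(\<Sum>k\<in>{k. n k \<le> N}. norm (a k)) \<le> \<gamma> * gfun v (real N)" if N: "N \<ge> 1" for N
  proof -
    define r where "r = real N / (real N + 1)"
    have r: "0 \<le> r" "r < 1" unfolding r_def by auto
    define A where "A = {k. n k \<le> N}"
    have A_sub: "A \<subseteq> {..<q * N}"
    proof
      fix k assume "k \<in> A"
      then have "k < N" using n_ge_Suc[of k] unfolding A_def by simp
      also have "N \<le> q * N" using q_pos by simp
      finally show "k \<in> {..<q * N}" by simp
    qed
    have "(\<Sum>k\<in>A. norm (a k)) \<le> (\<Sum>k\<in>A. exp 1 * (norm (a k) * r ^ n k))"
    proof (rule sum_mono)
      fix k assume "k \<in> A"
      then have "r ^ N \<le> r ^ n k" using r unfolding A_def by (intro power_decreasing) auto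
      then have "1 \<le> exp 1 * r ^ n k"
        using radius_power_lower_bound[OF N] unfolding r_def[symmetric] by (smt (verit) exp_gt_zero mult_left_mono)
      then show "norm (a k) \<le> exp 1 * (norm (a k) * r ^ n k)"
        using mult_left_mono[of 1 "exp 1 * r ^ n k" "norm (a k)"] by (simp add: algebra_simps)
    qed
    also have "\<dots> \<le> exp 1 * (\<Sum>k<q * N. norm (a k) * r ^ n k)"
      using A_sub r by (simp add: sum_distrib_left[symmetric] sum_mono2)
    also have "\<dots> \<le> exp 1 * (2 * real q * (K * v r))"
      using r K(2) by (intro mult_left_mono gap_series_circle_bound[OF summ u_def _ r q]) auto
    also have "\<dots> \<le> exp 1 * (2 * real q * (K * (D * gfun v (real N))))"
      using weight_at_radius_bound[OF wv dv N] K(1) unfolding r_def by (intro mult_left_mono) auto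
    finally show ?thesis unfolding A_def \<gamma>_def by (simp add: algebra_simps)
  qed
  ultimately show ?thesis by blast
qed

end

lemma dyadic_scale_choice:
  fixes p :: nat and r X :: real
  assumes p: "p \<ge> 1" and r: "0 \<le> r" "r < 1" and X: "X = 1 / (1 - r)"
  shows "\<exists>j \<le> p. real p \<le> 2 ^ Suc j * X \<and> r ^ p \<le> exp (1 - 2 ^ j)"
proof -
  define P where "P = (\<lambda>j. real p \<le> 2 ^ Suc j * X)"
  have X1: "X \<ge> 1" unfolding X using r by (simp add: field_simps)
  have "real p < 2 ^ p" by (metis less_exp of_nat_less_iff of_nat_numeral of_nat_power)
  also have "\<dots> \<le> 2 ^ Suc p * 1" by simp
  also have "\<dots> \<le> 2 ^ Suc p * X" using X1 by (intro mult_left_mono) auto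
  finally have Pp: "P p" unfolding P_def by simp
  define j0 where "j0 = (LEAST j. P j)"
  have Pj0: "P j0" and j0p: "j0 \<le> p" unfolding j0_def using Pp by (auto intro: LeastI Least_le)
  have "r ^ p \<le> exp (1 - 2 ^ j0)"
  proof (cases j0)
    case 0
    then show ?thesis using r by (simp add: power_le_one)
  next
    case (Suc i)
    then have "\<not> P i" using not_less_Least[of i P] unfolding j0_def by simp
    then have "real p * (1 - r) \<ge> 2 ^ j0 * X * (1 - r)"
      using r unfolding P_def Suc by (intro mult_right_mono) auto
    then have big: "real p * (1 - r) \<ge> 2 ^ j0" unfolding X using r by simp
    have "r ^ p \<le> exp (r - 1) ^ p"
      using r by (intro power_mono) (auto simp: exp_ge_add_one_self[of "r - 1", simplified])
    also have "\<dots> = exp (- (real p * (1 - r)))" by (simp add: exp_of_nat_mult[symmetric] algebra_simps)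
    also have "\<dots> \<le> exp (1 - 2 ^ j0)" using big by simp
    finally show ?thesis .
  qed
  then show ?thesis using Pj0 j0p unfolding P_def by blast
qed

text \<open>The constant \<open>\<Sum>j. e^(1-2^j) D^(j+1)\<close> collecting the dyadic pieces; it is finite since the
  super-exponential decay beats \<open>D^j\<close>.\<close>
definition dyadic_constant :: "real \<Rightarrow> real" where
  "dyadic_constant D = (\<Sum>j. exp (1 - 2 ^ j) * D ^ Suc j)"

lemma summable_dyadic_constant:
  fixes D :: real assumes "D \<ge> 1"
  shows "summable (\<lambda>j. exp (1 - 2 ^ j) * D ^ Suc j)"
proof (rule summable_ratio_test[of "1/2::real" "nat \<lceil>ln (2 * D)\<rceil>"])
  fix j assume j: "j \<ge> nat \<lceil>ln (2 * D)\<rceil>"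
  have "ln (2 * D) \<le> real j" using j by linarith
  also have "\<dots> \<le> 2 ^ j" by (metis less_exp of_nat_less_iff of_nat_numeral of_nat_power less_imp_le)
  finally have "exp (ln (2 * D)) \<le> exp (2 ^ j)" by simp
  then have "2 * D \<le> exp (2 ^ j)" using assms by simp
  then have "D * exp (- (2 ^ j)) \<le> 1/2" by (simp add: exp_minus field_simps)
  then have "(exp (1 - 2 ^ j) * D ^ Suc j) * (D * exp (- (2 ^ j))) \<le> (exp (1 - 2 ^ j) * D ^ Suc j) * (1/2)"
    using assms by (intro mult_left_mono) auto
  moreover have "exp (1 - 2 ^ Suc j) * D ^ Suc (Suc j) = (exp (1 - 2 ^ j) * D ^ Suc j) * (D * exp (- (2 ^ j)))"
    by (simp add: exp_add[symmetric] algebra_simps)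
  ultimately show "norm (exp (1 - 2 ^ Suc j) * D ^ Suc (Suc j)) \<le> 1/2 * norm (exp (1 - 2 ^ j) * D ^ Suc j)"
    using assms by (simp add: abs_mult mult_ac)
qed simp

lemma dyadic_constant_pos: "D \<ge> 1 \<Longrightarrow> dyadic_constant D > 0"
  unfolding dyadic_constant_def
  by (intro suminf_pos summable_dyadic_constant) auto

context lacunary
begin

lemma dyadic_level_bound:
  fixes a :: "nat \<Rightarrow> complex"
  assumes wv: "weight v" and dv: "doubling v D" and X: "X \<ge> 1" and \<gamma>: "\<gamma> > 0"
    and cond: "\<forall>N::nat. N \<ge> 1 \<longrightarrow> (\<Sum>k\<in>{k. n k \<le> N}. norm (a k)) \<le> \<gamma> * gfun v (real N)"
  shows "(\<Sum>k\<in>{k. n k \<le> nat \<lfloor>2 ^ Suc j * X\<rfloor>}. norm (a k)) \<le> \<gamma> * (D ^ Suc j * gfun v X)"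
proof -
  define M where "M = nat \<lfloor>2 ^ Suc j * X\<rfloor>"
  have "(2::real) * 1 \<le> 2 ^ Suc j * X" using X by (intro mult_mono) auto
  then have M: "M \<ge> 1" "real M \<le> 2 ^ Suc j * X" unfolding M_def by linarith+
  have "(\<Sum>k\<in>{k. n k \<le> M}. norm (a k)) \<le> \<gamma> * gfun v (real M)" using cond M(1) by blast
  also have "\<dots> \<le> \<gamma> * gfun v (2 ^ Suc j * X)" using M \<gamma> by (intro mult_left_mono gfun_mono[OF wv]) auto
  also have "\<dots> \<le> \<gamma> * (D ^ Suc j * gfun v X)" using \<gamma> by (intro mult_left_mono gfun_double_power[OF dv X]) auto
  finally show ?thesis unfolding M_def .
qed

text \<open>Each term is charged to
  the dyadic level \<open>j\<close> given by the lemma dyadic_scale_choice, where \<open>r^(n k) \<le> e^(1-2^j)\<close>.\<close>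
lemma gap_series_majorant:
  fixes a :: "nat \<Rightarrow> complex"
  assumes wv: "weight v" and dv: "doubling v D" and \<gamma>: "\<gamma> > 0"
    and cond: "\<forall>N::nat. N \<ge> 1 \<longrightarrow> (\<Sum>k\<in>{k. n k \<le> N}. norm (a k)) \<le> \<gamma> * gfun v (real N)"
    and r: "0 \<le> r" "r < 1"
  shows "(\<Sum>k<L. norm (a k) * r ^ n k) \<le> \<gamma> * dyadic_constant D * v r"
proof -
  define X where "X = 1 / (1 - r)"
  have X: "X \<ge> 1" unfolding X_def using r by (simp add: field_simps)
  define M where "M = (\<lambda>j::nat. nat \<lfloor>2 ^ Suc j * X\<rfloor>)"
  define c :: "nat \<Rightarrow> real" where "c = (\<lambda>j. exp (1 - 2 ^ j))"
  define level where "level = (\<lambda>j k. if n k \<le> M j then norm (a k) else 0)"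
  have charge: "norm (a k) * r ^ n k \<le> (\<Sum>j<n L. c j * level j k)" if k: "k < L" for k
  proof -
    obtain j where j: "j \<le> n k" "real (n k) \<le> 2 ^ Suc j * X" "r ^ n k \<le> c j"
      using dyadic_scale_choice[OF _ r X_def, of "n k"] n_pos[of k] unfolding c_def by auto
    have "j < n L" using j(1) strict_mono_n[THEN strict_monoD, OF k] by simp
    have "level j k = norm (a k)" using j(2) unfolding level_def M_def by (simp add: le_nat_floor)
    then have "norm (a k) * r ^ n k \<le> c j * level j k"
      using mult_left_mono[OF j(3), of "norm (a k)"] by (simp add: mult.commute)
    also have "\<dots> \<le> (\<Sum>j<n L. c j * level j k)"
      using \<open>j < n L\<close> by (intro member_le_sum) (auto simp: c_def level_def)
    finally show ?thesis .
  qed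
  have level_sum: "(\<Sum>k<L. level j k) \<le> \<gamma> * (D ^ Suc j * v r)" for j
  proof -
    have "(\<Sum>k<L. level j k) = (\<Sum>k\<in>{k\<in>{..<L}. n k \<le> M j}. norm (a k))"
      unfolding level_def by (rule sum.inter_filter[symmetric]) simp
    also have "\<dots> \<le> (\<Sum>k\<in>{k. n k \<le> M j}. norm (a k))"
      by (rule sum_mono2[OF finite_indices_below]) auto
    also have "\<dots> \<le> \<gamma> * (D ^ Suc j * gfun v X)"
      unfolding M_def by (rule dyadic_level_bound[OF wv dv X \<gamma> cond])
    finally show ?thesis unfolding X_def using gfun_at_radius r by simp
  qed
  have "(\<Sum>k<L. norm (a k) * r ^ n k) \<le> (\<Sum>k<L. \<Sum>j<n L. c j * level j k)"
    using charge by (intro sum_mono) auto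
  also have "\<dots> = (\<Sum>j<n L. c j * (\<Sum>k<L. level j k))"
    by (subst sum.swap) (simp add: sum_distrib_left)
  also have "\<dots> \<le> (\<Sum>j<n L. c j * (\<gamma> * (D ^ Suc j * v r)))"
    using level_sum by (intro sum_mono mult_left_mono) (auto simp: c_def)
  also have "\<dots> = \<gamma> * v r * (\<Sum>j<n L. exp (1 - 2 ^ j) * D ^ Suc j)"
    unfolding c_def by (simp add: sum_distrib_left algebra_simps)
  also have "\<dots> \<le> \<gamma> * v r * dyadic_constant D"
    unfolding dyadic_constant_def
    using \<gamma> weight_ge_1[OF wv r] doubling_ge_1[OF dv]
    by (intro mult_left_mono sum_le_suminf summable_dyadic_constant) auto
  finally show ?thesis by (simp add: algebra_simps)
qed

lemma bounded_if_coefficient_growth: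
  fixes a :: "nat \<Rightarrow> complex" and u :: "complex \<Rightarrow> real"
  assumes wv: "weight v" and dv: "doubling v D"
    and summ: "\<And>z. norm z < 1 \<Longrightarrow> summable (\<lambda>k. a k * z ^ n k)"
    and u_def: "\<And>z. u z = Re (\<Sum>k. a k * z ^ n k)"
    and \<gamma>: "\<gamma> > 0"
    and cond: "\<forall>N::nat. N \<ge> 1 \<longrightarrow> (\<Sum>k\<in>{k. n k \<le> N}. norm (a k)) \<le> \<gamma> * gfun v (real N)"
  shows "u \<in> kv_inf v"
proof -
  have harmonic: "harmonic_on (ball 0 1) u"
    using u_def by (intro harmonic_on_Re_holomorphic[OF gap_series_holomorphic[OF summ]]) auto
  define K where "K = \<gamma> * dyadic_constant D"
  have "K > 0" unfolding K_def using \<gamma> dyadic_constant_pos[OF doubling_ge_1[OF dv]] by simp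
  moreover have "u z \<le> K * v (norm z)" if "z \<in> ball 0 1" for z
  proof -
    have z: "norm z < 1" using that by simp
    have abs_summable: "summable (\<lambda>k. norm (a k * z ^ n k))" by (rule gap_series_abs_summable[OF summ z])
    have "u z \<le> norm (\<Sum>k. a k * z ^ n k)" unfolding u_def by (rule complex_Re_le_cmod)
    also have "\<dots> \<le> (\<Sum>k. norm (a k * z ^ n k))" by (rule summable_norm[OF abs_summable])
    also have "\<dots> \<le> K * v (norm z)"
    proof (rule suminf_le_const[OF abs_summable])
      fix L
      show "(\<Sum>k<L. norm (a k * z ^ n k)) \<le> K * v (norm z)"
        using gap_series_majorant[OF wv dv \<gamma> cond, of "norm z" L] z
        unfolding K_def by (simp add: norm_mult norm_power)
    qed
    finally show ?thesis .
  qed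
  ultimately show ?thesis unfolding kv_inf_def using harmonic by blast
qed

end

theorem theorem2:
  fixes v :: "real \<Rightarrow> real" and D lam :: real
    and n :: "nat \<Rightarrow> nat" and a :: "nat \<Rightarrow> complex" and u :: "complex \<Rightarrow> real"
  assumes "weight v"
    and "doubling v D"
    and "lam > 1"
    and "\<And>k. n k > 0"
    and "\<And>k. real (n (Suc k)) \<ge> lam * real (n k)"
    and "\<And>z. norm z < 1 \<Longrightarrow> summable (\<lambda>k. a k * z ^ n k)"
    and "\<And>z. u z = Re (\<Sum>k. a k * z ^ n k)"
  shows "u \<in> kv_inf v \<longleftrightarrow>
    (\<exists>\<gamma>>0. \<forall>N::nat. N \<ge> 1 \<longrightarrow> (\<Sum>k\<in>{k. n k \<le> N}. norm (a k)) \<le> \<gamma> * gfun v (real N))"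
proof -
  interpret lacunary lam n using assms(3-5) by unfold_locales auto
  show ?thesis
  proof
    assume "u \<in> kv_inf v"
    then obtain K where "K > 0" "\<And>z. norm z < 1 \<Longrightarrow> u z \<le> K * v (norm z)"
      unfolding kv_inf_def by auto
    then show "\<exists>\<gamma>>0. \<forall>N::nat. N \<ge> 1 \<longrightarrow> (\<Sum>k\<in>{k. n k \<le> N}. norm (a k)) \<le> \<gamma> * gfun v (real N)"
      using coefficient_growth_if_bounded[OF assms(1,2,6,7)] by blast
  next
    assume "\<exists>\<gamma>>0. \<forall>N::nat. N \<ge> 1 \<longrightarrow> (\<Sum>k\<in>{k. n k \<le> N}. norm (a k)) \<le> \<gamma> * gfun v (real N)"
    then show "u \<in> kv_inf v" using bounded_if_coefficient_growth[OF assms(1,2,6,7)] by blast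
  qed
qed

end
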